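(* Let $(H,\cdot,1,\Delta,\varepsilon,\lhd)$ be a left Post-Hopf algebra, and suppose that $\Delta$ is cocommutative or that $H$ is connected as a coalgebra. Then $(H,\cdot^{\mathrm{op}},1,\Delta^{\mathrm{cop}},\varepsilon,\lhd^{\mathrm{op}})$ is a right Post-Hopf algebra, where $x\cdot^{\mathrm{op}}y=y\cdot x$, $x\lhd^{\mathrm{op}}y=y\lhd x$ and $\Delta^{\mathrm{cop}}=\tau\circ\Delta$ with $\tau(a\otimes b)=b\otimes a$.
   Context: Sweedler notation $\Delta(x)=x^{(1)}\otimes x^{(2)}$. The convolution algebra $\mathrm{Hom}(H,\mathrm{End}(H))$ (relative to the coproduct in use) has product $(f\star g)(x)=f(x^{(1)})\circ g(x^{(2)})$ and unit $x\mapsto\varepsilon(x)\mathrm{Id}_H$. A left Post-Hopf algebra is a Hopf algebra with a coalgebra morphism $\lhd:H\otimes H\to H$ such that $x\lhd(y\cdot z)=(x^{(1)}\lhd y)\cdot(x^{(2)}\lhd z)$, $x\lhd(y\lhd z)=\big(x^{(1)}\cdot(x^{(2)}\lhd y)\big)\lhd z$, and $\alpha_\lhd(x)(y)=x\lhd y$ defines an invertible element of the convolution algebra. A right Post-Hopf algebra is a Hopf algebra with a coalgebra morphism $\rhd:H\otimes H\to H$ such that $(x\cdot y)\rhd z=(x\rhd z^{(1)})\cdot(y\rhd z^{(2)})$, $(x\rhd y)\rhd z=x\rhd\big((y\rhd z^{(1)})\cdot z^{(2)}\big)$, and $\gamma_\rhd(x)(y)=y\rhd x$ defines an invertible element of the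 convolution algebra. Connectedness: with $\rho(x)=x-\varepsilon(x)1$, $\tilde\Delta(x)=\Delta(x)-1\otimes x-x\otimes 1$ on $\ker\varepsilon$, $\tilde\Delta(1)=0$, $\tilde\Delta^{(0)}=\rho$, $\tilde\Delta^{(k)}=(\tilde\Delta\otimes\mathrm{Id}^{\otimes k-1})\circ\tilde\Delta^{(k-1)}$, $H$ is connected as a coalgebra if every $x$ satisfies $\tilde\Delta^{(n)}(x)=0$ for some $n$. *)

theory Defs
  imports Main "HOL.Vector_Spaces"
begin

text \<open>
  An element of the n-fold tensor power of H is
  represented by a formal sum of pure tensors, i.e. a list of lists of length n
  (the inner list [v1,...,vn] stands for v1 (x) ... (x) vn; scalars are absorbed in
  the first factor).  Two such formal sums denote the same tensor iff they agree on
  every multilinear form (classical definition of the tensor product as the span of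
  the evaluation functionals in the dual of the space of multilinear forms).
\<close>

definition multilinear_form ::
  "('k::field \<Rightarrow> 'h::ab_group_add \<Rightarrow> 'h) \<Rightarrow> nat \<Rightarrow> ('h list \<Rightarrow> 'k) \<Rightarrow> bool" where
  "multilinear_form sc n F \<longleftrightarrow>
     (\<forall>xs i a b c. length xs = n \<longrightarrow> i < n \<longrightarrow>
        F (xs[i := a + b]) = F (xs[i := a]) + F (xs[i := b]) \<and>
        F (xs[i := sc c a]) = c * F (xs[i := a]))"

definition tensor_eq ::
  "('k::field \<Rightarrow> 'h::ab_group_add \<Rightarrow> 'h) \<Rightarrow> nat \<Rightarrow> 'h list list \<Rightarrow> 'h list list \<Rightarrow> bool" where
  "tensor_eq sc n t s \<longleftrightarrow>
     (\<forall>F. multilinear_form sc n F \<longrightarrow> sum_list (map F t) = sum_list (map F s))"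

text \<open>Apply a map f : H -> H (x) H at tensor position i (i.e. Id^i (x) f (x) Id^...).\<close>
definition tensor_at :: "nat \<Rightarrow> ('h \<Rightarrow> 'h list list) \<Rightarrow> 'h list list \<Rightarrow> 'h list list" where
  "tensor_at i f t = concat (map (\<lambda>p. map (\<lambda>q. take i p @ q @ drop (Suc i) p) (f (p ! i))) t)"

text \<open>(m (x) m) o (Id (x) tau (x) Id) applied to t (x) s, for t, s in H (x) H.\<close>
definition tensor_mult :: "('h \<Rightarrow> 'h \<Rightarrow> 'h) \<Rightarrow> 'h list list \<Rightarrow> 'h list list \<Rightarrow> 'h list list" where
  "tensor_mult m t s = concat (map (\<lambda>p. map (\<lambda>q. [m (p!0) (q!0), m (p!1) (q!1)]) s) t)"

definition bilinear_map :: "('k::field \<Rightarrow> 'h::ab_group_add \<Rightarrow> 'h) \<Rightarrow> ('h \<Rightarrow> 'h \<Rightarrow> 'h) \<Rightarrow> bool" where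
  "bilinear_map sc f \<longleftrightarrow>
     (\<forall>x. Vector_Spaces.linear sc sc (f x)) \<and> (\<forall>y. Vector_Spaces.linear sc sc (\<lambda>x. f x y))"

definition coproduct_map :: "('k::field \<Rightarrow> 'h::ab_group_add \<Rightarrow> 'h) \<Rightarrow> ('h \<Rightarrow> 'h list list) \<Rightarrow> bool" where
  "coproduct_map sc \<Delta> \<longleftrightarrow>
     (\<forall>x. \<forall>p\<in>set (\<Delta> x). length p = 2) \<and>
     (\<forall>x y. tensor_eq sc 2 (\<Delta> (x + y)) (\<Delta> x @ \<Delta> y)) \<and>
     (\<forall>c x. tensor_eq sc 2 (\<Delta> (sc c x)) (map (\<lambda>p. [sc c (p!0), p!1]) (\<Delta> x)))"

definition bialgebra ::
  "('k::field \<Rightarrow> 'h::ab_group_add \<Rightarrow> 'h) \<Rightarrow> ('h \<Rightarrow> 'h \<Rightarrow> 'h) \<Rightarrow> 'h \<Rightarrow> ('h \<Rightarrow> 'h list list)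
    \<Rightarrow> ('h \<Rightarrow> 'k) \<Rightarrow> bool" where
  "bialgebra sc m one \<Delta> \<epsilon> \<longleftrightarrow>
     vector_space sc \<and> bilinear_map sc m \<and>
     (\<forall>x y z. m (m x y) z = m x (m y z)) \<and> (\<forall>x. m one x = x \<and> m x one = x) \<and>
     coproduct_map sc \<Delta> \<and> Vector_Spaces.linear sc (*) \<epsilon> \<and>
     (\<forall>x. tensor_eq sc 3 (tensor_at 0 \<Delta> (\<Delta> x)) (tensor_at 1 \<Delta> (\<Delta> x))) \<and>
     (\<forall>x. sum_list (map (\<lambda>p. sc (\<epsilon> (p!0)) (p!1)) (\<Delta> x)) = x \<and>
          sum_list (map (\<lambda>p. sc (\<epsilon> (p!1)) (p!0)) (\<Delta> x)) = x) \<and>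
     (\<forall>x y. tensor_eq sc 2 (\<Delta> (m x y)) (tensor_mult m (\<Delta> x) (\<Delta> y))) \<and>
     tensor_eq sc 2 (\<Delta> one) [[one, one]] \<and>
     (\<forall>x y. \<epsilon> (m x y) = \<epsilon> x * \<epsilon> y) \<and> \<epsilon> one = 1"

definition hopf_algebra ::
  "('k::field \<Rightarrow> 'h::ab_group_add \<Rightarrow> 'h) \<Rightarrow> ('h \<Rightarrow> 'h \<Rightarrow> 'h) \<Rightarrow> 'h \<Rightarrow> ('h \<Rightarrow> 'h list list)
    \<Rightarrow> ('h \<Rightarrow> 'k) \<Rightarrow> bool" where
  "hopf_algebra sc m one \<Delta> \<epsilon> \<longleftrightarrow>
     bialgebra sc m one \<Delta> \<epsilon> \<and>
     (\<exists>S. Vector_Spaces.linear sc sc S \<and>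
          (\<forall>x. sum_list (map (\<lambda>p. m (S (p!0)) (p!1)) (\<Delta> x)) = sc (\<epsilon> x) one \<and>
               sum_list (map (\<lambda>p. m (p!0) (S (p!1))) (\<Delta> x)) = sc (\<epsilon> x) one))"

text \<open>A linear map H (x) H -> H (given as a bilinear map) is a coalgebra morphism,
  where H (x) H carries the coproduct (Id (x) tau (x) Id) o (Delta (x) Delta) and counit eps (x) eps.\<close>
definition coalgebra_morphism2 ::
  "('k::field \<Rightarrow> 'h::ab_group_add \<Rightarrow> 'h) \<Rightarrow> ('h \<Rightarrow> 'h list list) \<Rightarrow> ('h \<Rightarrow> 'k)
    \<Rightarrow> ('h \<Rightarrow> 'h \<Rightarrow> 'h) \<Rightarrow> bool" where
  "coalgebra_morphism2 sc \<Delta> \<epsilon> f \<longleftrightarrow>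
     bilinear_map sc f \<and>
     (\<forall>x y. tensor_eq sc 2 (\<Delta> (f x y)) (tensor_mult f (\<Delta> x) (\<Delta> y))) \<and>
     (\<forall>x y. \<epsilon> (f x y) = \<epsilon> x * \<epsilon> y)"

text \<open>Convolution in Hom(H, End(H)): (f * g)(x) = f(x1) o g(x2).\<close>
definition conv :: "('h \<Rightarrow> 'h list list) \<Rightarrow> ('h \<Rightarrow> 'h \<Rightarrow> 'h) \<Rightarrow> ('h \<Rightarrow> 'h \<Rightarrow> 'h) \<Rightarrow> 'h \<Rightarrow> 'h \<Rightarrow> 'h::ab_group_add" where
  "conv \<Delta> f g x = (\<lambda>y. sum_list (map (\<lambda>p. f (p!0) (g (p!1) y)) (\<Delta> x)))"

text \<open>Elements of Hom(H, End(H)) are exactly the maps f with f linear and each f x linear,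
  i.e. bilinear maps; the unit is x |-> eps(x) Id.\<close>
definition conv_invertible ::
  "('k::field \<Rightarrow> 'h::ab_group_add \<Rightarrow> 'h) \<Rightarrow> ('h \<Rightarrow> 'h list list) \<Rightarrow> ('h \<Rightarrow> 'k)
    \<Rightarrow> ('h \<Rightarrow> 'h \<Rightarrow> 'h) \<Rightarrow> bool" where
  "conv_invertible sc \<Delta> \<epsilon> f \<longleftrightarrow>
     bilinear_map sc f \<and>
     (\<exists>g. bilinear_map sc g \<and>
          (\<forall>x. conv \<Delta> f g x = (\<lambda>y. sc (\<epsilon> x) y)) \<and>
          (\<forall>x. conv \<Delta> g f x = (\<lambda>y. sc (\<epsilon> x) y)))"

definition left_post_hopf ::
  "('k::field \<Rightarrow> 'h::ab_group_add \<Rightarrow> 'h) \<Rightarrow> ('h \<Rightarrow> 'h \<Rightarrow> 'h) \<Rightarrow> 'h \<Rightarrow> ('h \<Rightarrow> 'h list list)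
    \<Rightarrow> ('h \<Rightarrow> 'k) \<Rightarrow> ('h \<Rightarrow> 'h \<Rightarrow> 'h) \<Rightarrow> bool" where
  "left_post_hopf sc m one \<Delta> \<epsilon> tri \<longleftrightarrow>
     hopf_algebra sc m one \<Delta> \<epsilon> \<and> coalgebra_morphism2 sc \<Delta> \<epsilon> tri \<and>
     (\<forall>x y z. tri x (m y z) = sum_list (map (\<lambda>p. m (tri (p!0) y) (tri (p!1) z)) (\<Delta> x))) \<and>
     (\<forall>x y z. tri x (tri y z) = tri (sum_list (map (\<lambda>p. m (p!0) (tri (p!1) y)) (\<Delta> x))) z) \<and>
     conv_invertible sc \<Delta> \<epsilon> (\<lambda>x y. tri x y)"

definition right_post_hopf ::
  "('k::field \<Rightarrow> 'h::ab_group_add \<Rightarrow> 'h) \<Rightarrow> ('h \<Rightarrow> 'h \<Rightarrow> 'h) \<Rightarrow> 'h \<Rightarrow> ('h \<Rightarrow> 'h list list)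
    \<Rightarrow> ('h \<Rightarrow> 'k) \<Rightarrow> ('h \<Rightarrow> 'h \<Rightarrow> 'h) \<Rightarrow> bool" where
  "right_post_hopf sc m one \<Delta> \<epsilon> rtri \<longleftrightarrow>
     hopf_algebra sc m one \<Delta> \<epsilon> \<and> coalgebra_morphism2 sc \<Delta> \<epsilon> rtri \<and>
     (\<forall>x y z. rtri (m x y) z = sum_list (map (\<lambda>p. m (rtri x (p!0)) (rtri y (p!1))) (\<Delta> z))) \<and>
     (\<forall>x y z. rtri (rtri x y) z = rtri x (sum_list (map (\<lambda>p. m (rtri y (p!0)) (p!1)) (\<Delta> z)))) \<and>
     conv_invertible sc \<Delta> \<epsilon> (\<lambda>x y. rtri y x)"

definition cocommutative :: "('k::field \<Rightarrow> 'h::ab_group_add \<Rightarrow> 'h) \<Rightarrow> ('h \<Rightarrow> 'h list list) \<Rightarrow> bool" where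
  "cocommutative sc \<Delta> \<longleftrightarrow> (\<forall>x. tensor_eq sc 2 (map rev (\<Delta> x)) (\<Delta> x))"

definition rho :: "('k \<Rightarrow> 'h \<Rightarrow> 'h) \<Rightarrow> 'h \<Rightarrow> ('h \<Rightarrow> 'k) \<Rightarrow> 'h \<Rightarrow> 'h::ab_group_add" where
  "rho sc one \<epsilon> x = x - sc (\<epsilon> x) one"

text \<open>Reduced coproduct, extended linearly from ker eps and 1 (so reduced(x) = reduced(rho x)).\<close>
definition reduced_coproduct ::
  "('k \<Rightarrow> 'h \<Rightarrow> 'h) \<Rightarrow> 'h \<Rightarrow> ('h \<Rightarrow> 'h list list) \<Rightarrow> ('h \<Rightarrow> 'k) \<Rightarrow> 'h \<Rightarrow> 'h::ab_group_add list list" where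
  "reduced_coproduct sc one \<Delta> \<epsilon> x =
     (let r = rho sc one \<epsilon> x in \<Delta> r @ [[- one, r], [- r, one]])"

fun reduced_iter ::
  "('k \<Rightarrow> 'h \<Rightarrow> 'h) \<Rightarrow> 'h \<Rightarrow> ('h \<Rightarrow> 'h list list) \<Rightarrow> ('h \<Rightarrow> 'k) \<Rightarrow> nat \<Rightarrow> 'h \<Rightarrow> 'h::ab_group_add list list" where
  "reduced_iter sc one \<Delta> \<epsilon> 0 x = [[rho sc one \<epsilon> x]]"
| "reduced_iter sc one \<Delta> \<epsilon> (Suc k) x =
     tensor_at 0 (reduced_coproduct sc one \<Delta> \<epsilon>) (reduced_iter sc one \<Delta> \<epsilon> k x)"

definition connected_coalgebra ::
  "('k::field \<Rightarrow> 'h::ab_group_add \<Rightarrow> 'h) \<Rightarrow> 'h \<Rightarrow> ('h \<Rightarrow> 'h list list) \<Rightarrow> ('h \<Rightarrow> 'k) \<Rightarrow> bool" where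
  "connected_coalgebra sc one \<Delta> \<epsilon> \<longleftrightarrow>
     (\<forall>x. \<exists>n. tensor_eq sc (Suc n) (reduced_iter sc one \<Delta> \<epsilon> n x) [])"

end

theory Submission
  imports Defs
begin

text \<open>Reversing the product, the coproduct and the action turns the two compatibility axioms of
  a left post-Hopf algebra literally into those of a right one, and H with opposite product and
  coproduct is again a Hopf algebra.  What does not transfer formally is the invertibility of
  \<alpha>(x) = x \<lhd> -: it is assumed in the convolution algebra of \<Delta> but needed in that of \<Delta>^cop.
  For cocommutative \<Delta> the two convolution products agree.  For connected H one first shows that
  1 \<lhd> - is the identity, so h = \<epsilon> Id - \<alpha> vanishes on 1.  Its convolution powers are then sums
  over iterated reduced coproducts, hence vanish at each point from some order on, and the
  pointwise finite geometric series of h inverts \<alpha> = \<epsilon> Id - h.\<close>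

section \<open>Formal tensors\<close>

lemma linear_sum_list:
  assumes "Vector_Spaces.linear s1 s2 f"
  shows "f (sum_list (map g xs)) = sum_list (map (\<lambda>x. f (g x)) xs)"
proof -
  have add: "f (x + y) = f x + f y" for x y
    using assms by (simp add: linear_iff)
  then have "f 0 = 0"
    using add[of 0 0] by simp
  then show ?thesis
    by (induction xs) (simp_all add: add)
qed

lemma sum_list_sum_commute:
  fixes f :: "'a \<Rightarrow> 'b \<Rightarrow> 'c::comm_monoid_add"
  shows "sum_list (map (\<lambda>p. \<Sum>k\<in>K. f p k) A) = (\<Sum>k\<in>K. sum_list (map (\<lambda>p. f p k) A))"
  by (induction A) (auto simp: sum.distrib)

lemma sum_list_map_swap:
  fixes f :: "'a \<Rightarrow> 'b \<Rightarrow> 'c::comm_monoid_add"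
  shows "sum_list (map (\<lambda>p. sum_list (map (f p) B)) A) = sum_list (map (\<lambda>q. sum_list (map (\<lambda>p. f p q) A)) B)"
  by (induction A) (auto simp: sum_list_addf)

lemma sum_list_map_concat:
  "sum_list (map F (concat (map g xs))) = sum_list (map (\<lambda>p. sum_list (map F (g p))) xs)"
  by (induction xs) auto

lemma length_2E:
  assumes "length p = 2"
  obtains a b where "p = [a, b]"
  using assms by (auto simp: length_Suc_conv numeral_2_eq_2)

lemma rev_length_2: "length p = 2 \<Longrightarrow> rev p = [p!1, p!0]"
  by (elim length_2E) simp

lemma length_2_take_drop: "length p = 2 \<Longrightarrow> take 1 p = [p!0] \<and> drop 1 p = [p!1]"
  by (elim length_2E) simp

lemma sum_list_map_rev_2:
  assumes "\<forall>p\<in>set xs. length p = 2"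
  shows "sum_list (map G (map rev xs)) = sum_list (map (\<lambda>p. G [p!1, p!0]) xs)"
  using assms by (simp add: rev_length_2 cong: map_cong)

lemma bilinear_map_flip: "bilinear_map sc (\<lambda>x y. f y x) \<longleftrightarrow> bilinear_map sc f"
  unfolding bilinear_map_def by auto

lemma bilinear_map_right: "bilinear_map sc f \<Longrightarrow> Vector_Spaces.linear sc sc (f x)"
  by (simp add: bilinear_map_def)

lemma bilinear_map_left: "bilinear_map sc f \<Longrightarrow> Vector_Spaces.linear sc sc (\<lambda>x. f x y)"
  by (simp add: bilinear_map_def)

definition multilinear_map :: "('k::field \<Rightarrow> 'h::ab_group_add \<Rightarrow> 'h) \<Rightarrow> nat \<Rightarrow> ('h list \<Rightarrow> 'h) \<Rightarrow> bool" where
  "multilinear_map sc n G \<longleftrightarrow>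
     (\<forall>xs i a b c. length xs = n \<longrightarrow> i < n \<longrightarrow>
        G (xs[i := a + b]) = G (xs[i := a]) + G (xs[i := b]) \<and>
        G (xs[i := sc c a]) = sc c (G (xs[i := a])))"

lemma vector_eq_if_functionals_eq:
  fixes sc :: "'k::field \<Rightarrow> 'h::ab_group_add \<Rightarrow> 'h"
  assumes "vector_space sc"
    and "\<And>\<phi>. Vector_Spaces.linear sc (*) \<phi> \<Longrightarrow> \<phi> u = \<phi> v"
  shows "u = v"
proof (rule ccontr)
  assume "u \<noteq> v"
  interpret dual: vector_space_pair sc "(*) :: 'k \<Rightarrow> 'k \<Rightarrow> 'k"
    using assms(1) by unfold_locales (auto simp: algebra_simps vector_space_def)
  have "dual.vs1.independent {u - v}"
    using \<open>u \<noteq> v\<close> by (simp add: dual.vs1.independent_insertI dual.vs1.independent_empty)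
  then obtain \<phi> where \<phi>: "Vector_Spaces.linear sc (*) \<phi>" "\<phi> (u - v) = 1"
    using dual.linear_independent_extend[of "{u - v}" "\<lambda>_. 1"] by auto
  then show False
    using assms(2)[OF \<phi>(1)] dual.linear_diff[OF \<phi>(1)] by simp
qed

text \<open>Equal tensors cannot be told apart by vector-valued multilinear maps either: compose with
  every linear functional and separate points of the space.\<close>

lemma tensor_eq_sum_list_map:
  assumes vs: "vector_space sc" and t: "tensor_eq sc n t s" and G: "multilinear_map sc n G"
  shows "sum_list (map G t) = sum_list (map G s)"
proof (rule vector_eq_if_functionals_eq[OF vs])
  fix \<phi> assume \<phi>: "Vector_Spaces.linear sc (*) \<phi>"
  then have "multilinear_form sc n (\<lambda>xs. \<phi> (G xs))"
    using G unfolding multilinear_form_def multilinear_map_def by (simp add: linear_iff)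
  then show "\<phi> (sum_list (map G t)) = \<phi> (sum_list (map G s))"
    using t by (simp add: linear_sum_list[OF \<phi>] tensor_eq_def o_def)
qed

lemma tensor_eq_sym: "tensor_eq sc n t s \<Longrightarrow> tensor_eq sc n s t"
  by (simp add: tensor_eq_def)

lemma tensor_eq_trans: "tensor_eq sc n t s \<Longrightarrow> tensor_eq sc n s r \<Longrightarrow> tensor_eq sc n t r"
  by (simp add: tensor_eq_def)

lemma sum_list_tensor_at:
  "sum_list (map G (tensor_at i D t)) =
     sum_list (map (\<lambda>p. sum_list (map (\<lambda>q. G (take i p @ q @ drop (Suc i) p)) (D (p!i)))) t)"
  by (simp add: tensor_at_def sum_list_map_concat o_def)

lemma multilinear_form_rev:
  fixes sc :: "'k::field \<Rightarrow> 'h::ab_group_add \<Rightarrow> 'h" and F :: "'h list \<Rightarrow> 'k"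
  assumes "multilinear_form sc n F"
  shows "multilinear_form sc n (\<lambda>xs. F (rev xs))"
  unfolding multilinear_form_def
proof (intro allI impI)
  fix xs :: "'h list" and i a b c
  assume l: "length xs = n" and i: "i < n"
  have r: "rev (xs[i := v]) = (rev xs)[n - i - 1 := v]" for v
    using rev_update[of i xs] l i by simp
  show "F (rev (xs[i := a + b])) = F (rev (xs[i := a])) + F (rev (xs[i := b])) \<and>
       F (rev (xs[i := sc c a])) = c * F (rev (xs[i := a]))"
    unfolding r using assms l i by (auto simp: multilinear_form_def)
qed

lemma tensor_eq_map_rev: "tensor_eq sc n t s \<Longrightarrow> tensor_eq sc n (map rev t) (map rev s)"
  unfolding tensor_eq_def by (auto simp: o_def dest: multilinear_form_rev)

lemma tensor_eq_map_rev_tensor_mult: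
  assumes A: "\<forall>p\<in>set A. length p = 2" and B: "\<forall>q\<in>set B. length q = 2"
  shows "tensor_eq sc 2 (map rev (tensor_mult f B A)) (tensor_mult (\<lambda>a b. f b a) (map rev A) (map rev B))"
  unfolding tensor_eq_def
proof (intro allI impI)
  fix F :: "'a list \<Rightarrow> 'b"
  have "sum_list (map F (map rev (tensor_mult f B A))) =
        sum_list (map (\<lambda>q. sum_list (map (\<lambda>p. F [f (q!1) (p!1), f (q!0) (p!0)]) A)) B)"
    by (simp add: tensor_mult_def sum_list_map_concat o_def)
  also have "\<dots> = sum_list (map (\<lambda>p. sum_list (map (\<lambda>q. F [f (q!1) (p!1), f (q!0) (p!0)]) B)) A)"
    by (rule sum_list_map_swap[symmetric])
  also have "\<dots> = sum_list (map F (tensor_mult (\<lambda>a b. f b a) (map rev A) (map rev B)))"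
    unfolding tensor_mult_def sum_list_map_concat map_map o_def
    by (auto simp: A B rev_length_2 intro!: arg_cong[where f=sum_list] map_cong)
  finally show "sum_list (map F (map rev (tensor_mult f B A))) =
        sum_list (map F (tensor_mult (\<lambda>a b. f b a) (map rev A) (map rev B)))" .
qed

lemma tensor_at_map_rev:
  assumes "\<forall>p\<in>set t. length p = 2"
  shows "tensor_at 0 (\<lambda>x. map rev (D x)) (map rev t) = map rev (tensor_at 1 D t)"
    and "tensor_at 1 (\<lambda>x. map rev (D x)) (map rev t) = map rev (tensor_at 0 D t)"
  using assms by (auto simp: tensor_at_def map_concat numeral_2_eq_2 length_Suc_conv
      intro!: arg_cong[where f=concat] map_cong)

lemma tensor_eq_move_scalar:
  "tensor_eq sc 2 (map (\<lambda>p. [p!0, sc c (p!1)]) t) (map (\<lambda>p. [sc c (p!0), p!1]) t)"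
proof -
  have move: "F [a, sc c b] = F [sc c a, b]" if "multilinear_form sc 2 F" for F a b
  proof -
    have "F ([a, b][1 := sc c b]) = c * F ([a, b][1 := b])"
      and "F ([a, b][0 := sc c a]) = c * F ([a, b][0 := a])"
      using that[unfolded multilinear_form_def, rule_format, of "[a, b]" 1 b b c]
        that[unfolded multilinear_form_def, rule_format, of "[a, b]" 0 a a c] by simp_all
    then show ?thesis
      by simp
  qed
  show ?thesis
    unfolding tensor_eq_def by (simp add: move o_def)
qed

section \<open>The opposite Hopf algebra\<close>

lemma coproduct_map_op:
  assumes "coproduct_map sc \<Delta>"
  shows "coproduct_map sc (\<lambda>x. map rev (\<Delta> x))"
  unfolding coproduct_map_def
proof (intro conjI allI)
  have len: "\<forall>p\<in>set (\<Delta> x). length p = 2" for x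
    using assms by (simp add: coproduct_map_def)
  fix x
  show "\<forall>p\<in>set (map rev (\<Delta> x)). length p = 2"
    using len by simp
  fix y
  show "tensor_eq sc 2 (map rev (\<Delta> (x + y))) (map rev (\<Delta> x) @ map rev (\<Delta> y))"
    using assms tensor_eq_map_rev unfolding coproduct_map_def by fastforce
next
  fix c x
  have "tensor_eq sc 2 (map rev (\<Delta> (sc c x))) (map rev (map (\<lambda>p. [sc c (p!0), p!1]) (\<Delta> x)))"
    using assms tensor_eq_map_rev unfolding coproduct_map_def by blast
  also have "map rev (map (\<lambda>p. [sc c (p!0), p!1]) (\<Delta> x)) = map (\<lambda>p. [p!0, sc c (p!1)]) (map rev (\<Delta> x))"
    using assms by (simp add: coproduct_map_def rev_length_2 cong: map_cong)
  finally show "tensor_eq sc 2 (map rev (\<Delta> (sc c x))) (map (\<lambda>p. [sc c (p!0), p!1]) (map rev (\<Delta> x)))"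
    using tensor_eq_trans tensor_eq_move_scalar by blast
qed

lemma hopf_algebra_op:
  assumes H: "hopf_algebra sc m one \<Delta> \<epsilon>"
  shows "hopf_algebra sc (\<lambda>x y. m y x) one (\<lambda>x. map rev (\<Delta> x)) \<epsilon>"
proof -
  have B: "bialgebra sc m one \<Delta> \<epsilon>"
    using H by (simp add: hopf_algebra_def)
  have vs: "vector_space sc" and mb: "bilinear_map sc m" and assoc: "\<forall>x y z. m (m x y) z = m x (m y z)"
    and munit: "\<forall>x. m one x = x \<and> m x one = x" and counit_lin: "Vector_Spaces.linear sc (*) \<epsilon>"
    and counit: "\<forall>x. sum_list (map (\<lambda>p. sc (\<epsilon> (p!0)) (p!1)) (\<Delta> x)) = x \<and>
          sum_list (map (\<lambda>p. sc (\<epsilon> (p!1)) (p!0)) (\<Delta> x)) = x"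
    and counit_mult: "\<forall>x y. \<epsilon> (m x y) = \<epsilon> x * \<epsilon> y" and counit_one: "\<epsilon> one = 1"
    and cm: "coproduct_map sc \<Delta>" and coass: "\<forall>x. tensor_eq sc 3 (tensor_at 0 \<Delta> (\<Delta> x)) (tensor_at 1 \<Delta> (\<Delta> x))"
    and mult: "\<forall>x y. tensor_eq sc 2 (\<Delta> (m x y)) (tensor_mult m (\<Delta> x) (\<Delta> y))"
    and unit: "tensor_eq sc 2 (\<Delta> one) [[one, one]]"
    using B unfolding bialgebra_def by blast+
  have len: "\<forall>p\<in>set (\<Delta> x). length p = 2" for x
    using cm by (simp add: coproduct_map_def)
  have "bialgebra sc (\<lambda>x y. m y x) one (\<lambda>x. map rev (\<Delta> x)) \<epsilon>"
    unfolding bialgebra_def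
  proof (intro conjI allI)
    show "bilinear_map sc (\<lambda>x y. m y x)"
      using mb by (simp only: bilinear_map_flip[of sc m])
    show "coproduct_map sc (\<lambda>x. map rev (\<Delta> x))"
      by (rule coproduct_map_op[OF cm])
    fix x
    show "tensor_eq sc 3 (tensor_at 0 (\<lambda>x. map rev (\<Delta> x)) (map rev (\<Delta> x)))
                         (tensor_at 1 (\<lambda>x. map rev (\<Delta> x)) (map rev (\<Delta> x)))"
      unfolding tensor_at_map_rev[OF len] by (rule tensor_eq_map_rev[OF tensor_eq_sym[OF coass[rule_format]]])
    show "sum_list (map (\<lambda>p. sc (\<epsilon> (p!0)) (p!1)) (map rev (\<Delta> x))) = x"
      and "sum_list (map (\<lambda>p. sc (\<epsilon> (p!1)) (p!0)) (map rev (\<Delta> x))) = x"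
      using counit unfolding sum_list_map_rev_2[OF len] by simp_all
    fix y
    have "tensor_eq sc 2 (map rev (\<Delta> (m y x))) (map rev (tensor_mult m (\<Delta> y) (\<Delta> x)))"
      by (rule tensor_eq_map_rev[OF mult[rule_format]])
    then show "tensor_eq sc 2 (map rev (\<Delta> (m y x)))
        (tensor_mult (\<lambda>x y. m y x) (map rev (\<Delta> x)) (map rev (\<Delta> y)))"
      by (rule tensor_eq_trans[OF _ tensor_eq_map_rev_tensor_mult[OF len len]])
  next
    show "tensor_eq sc 2 (map rev (\<Delta> one)) [[one, one]]"
      using tensor_eq_map_rev[OF unit] by simp
    show "vector_space sc" "Vector_Spaces.linear sc (*) \<epsilon>" "\<epsilon> one = 1"
      by (fact vs counit_lin counit_one)+
  next
    fix x y z
    show "m z (m y x) = m (m z y) x" "m x one = x" "m one x = x" "\<epsilon> (m y x) = \<epsilon> x * \<epsilon> y"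
      using assoc munit counit_mult by (simp_all add: mult.commute)
  qed
  txt \<open>The antipode of H serves unchanged: reversal exchanges its two defining identities.\<close>
  moreover obtain S where "Vector_Spaces.linear sc sc S"
    "\<forall>x. sum_list (map (\<lambda>p. m (S (p!0)) (p!1)) (\<Delta> x)) = sc (\<epsilon> x) one \<and>
         sum_list (map (\<lambda>p. m (p!0) (S (p!1))) (\<Delta> x)) = sc (\<epsilon> x) one"
    using H by (auto simp: hopf_algebra_def)
  ultimately show ?thesis
    unfolding hopf_algebra_def sum_list_map_rev_2[OF len] by auto
qed

lemma coalgebra_morphism2_op:
  assumes f: "coalgebra_morphism2 sc \<Delta> \<epsilon> f" and len: "\<And>x. \<forall>p\<in>set (\<Delta> x). length p = 2"
  shows "coalgebra_morphism2 sc (\<lambda>x. map rev (\<Delta> x)) \<epsilon> (\<lambda>x y. f y x)"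
  unfolding coalgebra_morphism2_def
proof (intro conjI allI)
  fix x y
  have "tensor_eq sc 2 (map rev (\<Delta> (f y x))) (map rev (tensor_mult f (\<Delta> y) (\<Delta> x)))"
    using f by (simp add: coalgebra_morphism2_def tensor_eq_map_rev)
  then show "tensor_eq sc 2 (map rev (\<Delta> (f y x)))
      (tensor_mult (\<lambda>x y. f y x) (map rev (\<Delta> x)) (map rev (\<Delta> y)))"
    by (rule tensor_eq_trans[OF _ tensor_eq_map_rev_tensor_mult[OF len len]])
qed (use f bilinear_map_flip[of sc f] in \<open>simp_all add: coalgebra_morphism2_def mult.commute\<close>)

section \<open>The convolution algebra\<close>

sublocale vector_space \<subseteq> endo: vector_space_pair scale scale
  by unfold_locales

context vector_space
begin

lemma linear_compose_endo:
  "Vector_Spaces.linear scale scale f \<Longrightarrow> Vector_Spaces.linear scale scale g \<Longrightarrow>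
    Vector_Spaces.linear scale scale (\<lambda>x. f (g x))"
  using Vector_Spaces.linear_compose[of scale scale g scale f] by (simp add: o_def)

lemma linear_sum_list_pointwise:
  assumes "\<And>p. p \<in> set xs \<Longrightarrow> Vector_Spaces.linear scale scale (F p)"
  shows "Vector_Spaces.linear scale scale (\<lambda>y. sum_list (map (\<lambda>p. F p y) xs))"
  using assms by (induction xs) (auto intro: endo.linear_compose_add endo.linear_zero)

lemma multilinear_map_2I:
  assumes "\<And>b. Vector_Spaces.linear scale scale (\<lambda>a. \<Phi> a b)"
    and "\<And>a. Vector_Spaces.linear scale scale (\<Phi> a)"
  shows "multilinear_map scale 2 (\<lambda>p. \<Phi> (p!0) (p!1))"
  unfolding multilinear_map_def
proof (intro allI impI)
  fix xs :: "'b list" and i :: nat and a b c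
  assume "length xs = 2" and "i < 2"
  moreover obtain u v where "xs = [u, v]"
    using \<open>length xs = 2\<close> by (rule length_2E)
  ultimately show "\<Phi> (xs[i := a + b] ! 0) (xs[i := a + b] ! 1) =
        \<Phi> (xs[i := a] ! 0) (xs[i := a] ! 1) + \<Phi> (xs[i := b] ! 0) (xs[i := b] ! 1) \<and>
       \<Phi> (xs[i := scale c a] ! 0) (xs[i := scale c a] ! 1) = scale c (\<Phi> (xs[i := a] ! 0) (xs[i := a] ! 1))"
    using endo.linear_add[OF assms(1)] endo.linear_scale[OF assms(1)]
      endo.linear_add[OF assms(2)] endo.linear_scale[OF assms(2)]
    by (auto simp: less_2_cases_iff)
qed

lemma multilinear_map_3I:
  assumes "\<And>b d. Vector_Spaces.linear scale scale (\<lambda>a. \<Phi> a b d)"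
    and "\<And>a d. Vector_Spaces.linear scale scale (\<lambda>b. \<Phi> a b d)"
    and "\<And>a b. Vector_Spaces.linear scale scale (\<Phi> a b)"
  shows "multilinear_map scale 3 (\<lambda>p. \<Phi> (p!0) (p!1) (p!2))"
  unfolding multilinear_map_def
proof (intro allI impI)
  fix xs :: "'b list" and i :: nat and a b c
  assume "length xs = 3" and "i < 3"
  moreover obtain u v w where "xs = [u, v, w]"
    using \<open>length xs = 3\<close> by (auto simp: numeral_3_eq_3 length_Suc_conv)
  moreover have "i = 0 \<or> i = 1 \<or> i = 2"
    using \<open>i < 3\<close> by auto
  ultimately show "\<Phi> (xs[i := a + b] ! 0) (xs[i := a + b] ! 1) (xs[i := a + b] ! 2) =
        \<Phi> (xs[i := a] ! 0) (xs[i := a] ! 1) (xs[i := a] ! 2) + \<Phi> (xs[i := b] ! 0) (xs[i := b] ! 1) (xs[i := b] ! 2) \<and>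
       \<Phi> (xs[i := scale c a] ! 0) (xs[i := scale c a] ! 1) (xs[i := scale c a] ! 2) =
         scale c (\<Phi> (xs[i := a] ! 0) (xs[i := a] ! 1) (xs[i := a] ! 2))"
    using endo.linear_add[OF assms(1)] endo.linear_scale[OF assms(1)]
      endo.linear_add[OF assms(2)] endo.linear_scale[OF assms(2)]
      endo.linear_add[OF assms(3)] endo.linear_scale[OF assms(3)]
    by (auto simp: numeral_2_eq_2)
qed

lemma multilinear_map_conv_summand:
  assumes "bilinear_map scale f" and "bilinear_map scale g"
  shows "multilinear_map scale 2 (\<lambda>p. f (p!0) (g (p!1) y))"
  by (rule multilinear_map_2I[OF bilinear_map_left[OF assms(1)]
        linear_compose_endo[OF bilinear_map_right[OF assms(1)] bilinear_map_left[OF assms(2)]]])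

definition coaugmented_coalgebra :: "('b \<Rightarrow> 'b list list) \<Rightarrow> ('b \<Rightarrow> 'a) \<Rightarrow> 'b \<Rightarrow> bool" where
  "coaugmented_coalgebra D \<epsilon> one \<longleftrightarrow> coproduct_map scale D \<and> Vector_Spaces.linear scale (*) \<epsilon> \<and>
     (\<forall>x. tensor_eq scale 3 (tensor_at 0 D (D x)) (tensor_at 1 D (D x))) \<and>
     (\<forall>x. sum_list (map (\<lambda>p. scale (\<epsilon> (p!0)) (p!1)) (D x)) = x \<and>
          sum_list (map (\<lambda>p. scale (\<epsilon> (p!1)) (p!0)) (D x)) = x) \<and>
     tensor_eq scale 2 (D one) [[one, one]] \<and> \<epsilon> one = 1"

lemma bialgebra_coaugmented_coalgebra: "bialgebra scale m one D \<epsilon> \<Longrightarrow> coaugmented_coalgebra D \<epsilon> one"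
  unfolding bialgebra_def coaugmented_coalgebra_def by blast

abbreviation conv_unit :: "('b \<Rightarrow> 'a) \<Rightarrow> 'b \<Rightarrow> 'b \<Rightarrow> 'b" where
  "conv_unit \<epsilon> \<equiv> \<lambda>x y. scale (\<epsilon> x) y"

lemma bilinear_map_conv_unit:
  assumes "Vector_Spaces.linear scale (*) \<epsilon>"
  shows "bilinear_map scale (conv_unit \<epsilon>)"
  using assms vector_space_axioms
  by (simp add: bilinear_map_def linear_iff scale_left_distrib scale_right_distrib)

abbreviation conv_pow :: "('b \<Rightarrow> 'b list list) \<Rightarrow> ('b \<Rightarrow> 'a) \<Rightarrow> ('b \<Rightarrow> 'b \<Rightarrow> 'b) \<Rightarrow> nat \<Rightarrow> 'b \<Rightarrow> 'b \<Rightarrow> 'b" where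
  "conv_pow D \<epsilon> h k \<equiv> (conv D h ^^ k) (conv_unit \<epsilon>)"

context
  fixes D :: "'b \<Rightarrow> 'b list list" and \<epsilon> :: "'b \<Rightarrow> 'a" and one :: 'b
  assumes C: "coaugmented_coalgebra D \<epsilon> one"
begin

lemma coproduct_length: "p \<in> set (D x) \<Longrightarrow> length p = 2"
  using C by (simp add: coaugmented_coalgebra_def coproduct_map_def)

lemma bilinear_map_conv:
  assumes f: "bilinear_map scale f" and g: "bilinear_map scale g"
  shows "bilinear_map scale (conv D f g)"
  unfolding bilinear_map_def
proof (intro conjI allI)
  fix x
  show "Vector_Spaces.linear scale scale (conv D f g x)"
    unfolding conv_def
    by (intro linear_sum_list_pointwise linear_compose_endo[OF bilinear_map_right[OF f] bilinear_map_right[OF g]])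
next
  fix y
  let ?G = "\<lambda>p. f (p!0) (g (p!1) y)"
  have G: "multilinear_map scale 2 ?G"
    by (rule multilinear_map_conv_summand[OF f g])
  have cm: "coproduct_map scale D"
    using C by (simp add: coaugmented_coalgebra_def)
  show "Vector_Spaces.linear scale scale (\<lambda>x. conv D f g x y)"
    unfolding linear_iff conv_def
  proof (intro conjI allI vector_space_axioms)
    fix x z
    show "sum_list (map ?G (D (x + z))) = sum_list (map ?G (D x)) + sum_list (map ?G (D z))"
      using tensor_eq_sum_list_map[OF vector_space_axioms _ G, of "D (x + z)" "D x @ D z"] cm
      by (simp add: coproduct_map_def)
  next
    fix c x
    have "sum_list (map ?G (D (scale c x))) = sum_list (map ?G (map (\<lambda>p. [scale c (p!0), p!1]) (D x)))"
      using tensor_eq_sum_list_map[OF vector_space_axioms _ G] cm by (simp add: coproduct_map_def del: map_map)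
    also have "\<dots> = scale c (sum_list (map ?G (D x)))"
      using f by (simp add: o_def linear_sum_list[OF linear_scale_self] endo.linear_scale[OF bilinear_map_left])
    finally show "sum_list (map ?G (D (scale c x))) = scale c (sum_list (map ?G (D x)))" .
  qed
qed

lemma conv_unit_left:
  assumes g: "bilinear_map scale g"
  shows "conv D (conv_unit \<epsilon>) g = g"
proof (intro ext)
  fix x y
  have "conv D (conv_unit \<epsilon>) g x y = g (sum_list (map (\<lambda>p. scale (\<epsilon> (p!0)) (p!1)) (D x))) y"
    by (simp add: conv_def endo.linear_scale[OF bilinear_map_left[OF g]]
        linear_sum_list[OF bilinear_map_left[OF g]])
  then show "conv D (conv_unit \<epsilon>) g x y = g x y"
    using C by (simp add: coaugmented_coalgebra_def)
qed

lemma conv_unit_right: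
  assumes f: "bilinear_map scale f"
  shows "conv D f (conv_unit \<epsilon>) = f"
proof (intro ext)
  fix x y
  have "conv D f (conv_unit \<epsilon>) x y = f (sum_list (map (\<lambda>p. scale (\<epsilon> (p!1)) (p!0)) (D x))) y"
    by (simp add: conv_def endo.linear_scale[OF bilinear_map_left[OF f]]
        endo.linear_scale[OF bilinear_map_right[OF f]] linear_sum_list[OF bilinear_map_left[OF f]])
  then show "conv D f (conv_unit \<epsilon>) x y = f x y"
    using C by (simp add: coaugmented_coalgebra_def)
qed

lemma sum_list_coproduct_one:
  assumes "multilinear_map scale 2 G"
  shows "sum_list (map G (D one)) = G [one, one]"
  using tensor_eq_sum_list_map[OF vector_space_axioms _ assms, of "D one" "[[one, one]]"] C
  by (simp add: coaugmented_coalgebra_def)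

lemma conv_at_one:
  assumes "bilinear_map scale f" and "bilinear_map scale g"
  shows "conv D f g one y = f one (g one y)"
  using sum_list_coproduct_one[OF multilinear_map_conv_summand[OF assms]] by (simp add: conv_def)

lemma conv_assoc:
  assumes f: "bilinear_map scale f" and g: "bilinear_map scale g" and k: "bilinear_map scale k"
  shows "conv D (conv D f g) k = conv D f (conv D g k)"
proof (intro ext)
  fix x y
  let ?G = "\<lambda>p. f (p!0) (g (p!1) (k (p!2) y))"
  have G: "multilinear_map scale 3 ?G"
    by (rule multilinear_map_3I[OF bilinear_map_left[OF f]
          linear_compose_endo[OF bilinear_map_right[OF f] bilinear_map_left[OF g]]
          linear_compose_endo[OF bilinear_map_right[OF f]
            linear_compose_endo[OF bilinear_map_right[OF g] bilinear_map_left[OF k]]]])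
  have "conv D (conv D f g) k x y =
      sum_list (map (\<lambda>p. sum_list (map (\<lambda>q. f (q!0) (g (q!1) (k (p!1) y))) (D (p!0)))) (D x))"
    by (simp add: conv_def)
  also have "\<dots> = sum_list (map ?G (tensor_at 0 D (D x)))"
    by (simp add: sum_list_tensor_at length_2_take_drop coproduct_length nth_append cong: map_cong)
  also have "\<dots> = sum_list (map ?G (tensor_at 1 D (D x)))"
    using C by (intro tensor_eq_sum_list_map[OF vector_space_axioms _ G]) (simp add: coaugmented_coalgebra_def)
  also have "\<dots> = sum_list (map (\<lambda>p. sum_list (map (\<lambda>q. f (p!0) (g (q!0) (k (q!1) y))) (D (p!1)))) (D x))"
    by (simp add: sum_list_tensor_at length_2_take_drop coproduct_length nth_append cong: map_cong)
  also have "\<dots> = conv D f (conv D g k) x y"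
    by (simp add: conv_def linear_sum_list[OF bilinear_map_right[OF f]])
  finally show "conv D (conv D f g) k x y = conv D f (conv D g k) x y" .
qed

lemma bilinear_map_conv_pow:
  assumes "bilinear_map scale h"
  shows "bilinear_map scale (conv_pow D \<epsilon> h k)"
  using C assms by (induction k)
    (simp_all add: bilinear_map_conv bilinear_map_conv_unit coaugmented_coalgebra_def)

lemma conv_pow_Suc_right:
  assumes hb: "bilinear_map scale h"
  shows "conv D (conv_pow D \<epsilon> h k) h = conv_pow D \<epsilon> h (Suc k)"
proof (induction k)
  case 0
  show ?case
    by (simp add: conv_unit_left[OF hb] conv_unit_right[OF hb])
next
  case (Suc k)
  have "conv D (conv_pow D \<epsilon> h (Suc k)) h = conv D h (conv D (conv_pow D \<epsilon> h k) h)"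
    using conv_assoc[OF hb bilinear_map_conv_pow[OF hb] hb] by simp
  then show ?case
    using Suc.IH by simp
qed

context
  fixes h :: "'b \<Rightarrow> 'b \<Rightarrow> 'b" and N :: "'b \<Rightarrow> nat"
  assumes hb: "bilinear_map scale h"
    and nilpotent: "\<And>x k y. N x \<le> k \<Longrightarrow> conv_pow D \<epsilon> h (Suc k) x y = 0"
begin

lemma geometric_sum_extend:
  assumes "N x \<le> M"
  shows "(\<Sum>k\<le>N x. conv_pow D \<epsilon> h k x y) = (\<Sum>k\<le>M. conv_pow D \<epsilon> h k x y)"
proof (rule sum.mono_neutral_left)
  show "\<forall>i\<in>{..M} - {..N x}. conv_pow D \<epsilon> h i x y = 0"
  proof
    fix i assume "i \<in> {..M} - {..N x}"
    then obtain j where "i = Suc j" "N x \<le> j"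
      by (cases i) auto
    then show "conv_pow D \<epsilon> h i x y = 0"
      using nilpotent by simp
  qed
qed (use assms in auto)

lemma geometric_sum_telescope:
  assumes "N x \<le> M"
  shows "(\<Sum>k\<le>M. conv_pow D \<epsilon> h k x y) - (\<Sum>k\<le>M. conv_pow D \<epsilon> h (Suc k) x y) = scale (\<epsilon> x) y"
  using sum_telescope[of "\<lambda>k. conv_pow D \<epsilon> h k x y" M] nilpotent[OF assms]
  by (simp add: sum_subtractf)

lemma bilinear_map_geometric_sum:
  "bilinear_map scale (\<lambda>x y. \<Sum>k\<le>N x. conv_pow D \<epsilon> h k x y)"
  unfolding bilinear_map_def
proof (intro conjI allI)
  have P: "bilinear_map scale (conv_pow D \<epsilon> h k)" for k
    by (rule bilinear_map_conv_pow[OF hb])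
  fix x
  show "Vector_Spaces.linear scale scale (\<lambda>y. \<Sum>k\<le>N x. conv_pow D \<epsilon> h k x y)"
    using vector_space_axioms
    by (simp add: linear_iff endo.linear_add[OF bilinear_map_right[OF P]] sum.distrib
        endo.linear_scale[OF bilinear_map_right[OF P]] scale_sum_right)
next
  have P: "bilinear_map scale (conv_pow D \<epsilon> h k)" for k
    by (rule bilinear_map_conv_pow[OF hb])
  fix y
  show "Vector_Spaces.linear scale scale (\<lambda>x. \<Sum>k\<le>N x. conv_pow D \<epsilon> h k x y)"
    unfolding linear_iff
  proof (intro conjI allI vector_space_axioms)
    fix x z c
    let ?M = "N (x + z) + N x + N z"
    show "(\<Sum>k\<le>N (x + z). conv_pow D \<epsilon> h k (x + z) y) =
        (\<Sum>k\<le>N x. conv_pow D \<epsilon> h k x y) + (\<Sum>k\<le>N z. conv_pow D \<epsilon> h k z y)"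
      using geometric_sum_extend[of "x + z" ?M] geometric_sum_extend[of x ?M] geometric_sum_extend[of z ?M]
      by (simp add: endo.linear_add[OF bilinear_map_left[OF P]] sum.distrib)
    let ?M = "N (scale c x) + N x"
    show "(\<Sum>k\<le>N (scale c x). conv_pow D \<epsilon> h k (scale c x) y) = scale c (\<Sum>k\<le>N x. conv_pow D \<epsilon> h k x y)"
      using geometric_sum_extend[of "scale c x" ?M] geometric_sum_extend[of x ?M]
      by (simp add: endo.linear_scale[OF bilinear_map_left[OF P]] scale_sum_right)
  qed
qed

end

lemma conv_diff_left: "conv D (\<lambda>x y. f x y - g x y) k x y = conv D f k x y - conv D g k x y"
  by (simp add: conv_def sum_list_subtractf)

lemma conv_diff_right:
  assumes "bilinear_map scale k"
  shows "conv D k (\<lambda>x y. f x y - g x y) x y = conv D k f x y - conv D k g x y"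
  using endo.linear_diff[OF bilinear_map_right[OF assms]] by (simp add: conv_def sum_list_subtractf)

lemma conv_invertible_if_locally_nilpotent:
  assumes hb: "bilinear_map scale h"
    and "\<And>x. \<exists>n. \<forall>k\<ge>n. \<forall>y. conv_pow D \<epsilon> h (Suc k) x y = 0"
  shows "conv_invertible scale D \<epsilon> (\<lambda>x y. scale (\<epsilon> x) y - h x y)"
proof -
  obtain N where N: "\<And>x k y. N x \<le> k \<Longrightarrow> conv_pow D \<epsilon> h (Suc k) x y = 0"
    using assms(2) by metis
  define g where "g x y = (\<Sum>k\<le>N x. conv_pow D \<epsilon> h k x y)" for x y
  have gb: "bilinear_map scale g"
    unfolding g_def using bilinear_map_geometric_sum[where N=N, OF hb N] .
  have ub: "bilinear_map scale (conv_unit \<epsilon>)"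
    using C by (simp add: bilinear_map_conv_unit coaugmented_coalgebra_def)
  define M where "M x = N x + sum_list (map (\<lambda>p. N (p!0) + N (p!1)) (D x))" for x
  have M: "N x \<le> M x" "p \<in> set (D x) \<Longrightarrow> N (p!0) \<le> M x \<and> N (p!1) \<le> M x" for x p
    using member_le_sum_list[of "N (p!0) + N (p!1)" "map (\<lambda>p. N (p!0) + N (p!1)) (D x)"]
    by (auto simp: M_def)
  have gM: "g x y = (\<Sum>k\<le>K. conv_pow D \<epsilon> h k x y)" if "N x \<le> K" for x y K
    unfolding g_def by (rule geometric_sum_extend[where N=N, OF hb N that])
  have "conv D h g x y = (\<Sum>k\<le>M x. conv_pow D \<epsilon> h (Suc k) x y)" for x y
  proof -
    have "conv D h g x y = sum_list (map (\<lambda>p. \<Sum>k\<le>M x. h (p!0) (conv_pow D \<epsilon> h k (p!1) y)) (D x))"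
      unfolding conv_def[of D h g] using M(2)
      by (auto simp: gM[of _ "M x"] endo.linear_sum[OF bilinear_map_right[OF hb]]
          intro!: arg_cong[where f=sum_list] map_cong)
    then show ?thesis
      by (simp add: sum_list_sum_commute conv_def)
  qed
  moreover have "conv D g h x y = (\<Sum>k\<le>M x. conv_pow D \<epsilon> h (Suc k) x y)" for x y
  proof -
    have "conv D g h x y = sum_list (map (\<lambda>p. \<Sum>k\<le>M x. conv_pow D \<epsilon> h k (p!0) (h (p!1) y)) (D x))"
      unfolding conv_def[of D g h] using M(2) by (auto simp: gM[of _ "M x"] intro!: arg_cong[where f=sum_list] map_cong)
    also have "\<dots> = (\<Sum>k\<le>M x. conv D (conv_pow D \<epsilon> h k) h x y)"
      by (simp only: sum_list_sum_commute conv_def)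
    finally show ?thesis
      by (simp only: conv_pow_Suc_right[OF hb])
  qed
  ultimately show ?thesis
    unfolding conv_invertible_def
    using gb hb ub geometric_sum_telescope[where N=N, OF hb N M(1)]
    by (auto simp: gM[OF M(1)] conv_diff_left conv_diff_right conv_unit_left conv_unit_right
        bilinear_map_def intro!: exI[of _ g] endo.linear_compose_sub)
qed

end

section \<open>Connected coalgebras\<close>

lemma linear_fold:
  assumes "\<And>q. Vector_Spaces.linear scale scale (h q)"
  shows "Vector_Spaces.linear scale scale (fold h qs)"
proof (induction qs)
  case Nil
  show ?case
    using linear_id by (simp add: id_def)
next
  case (Cons q qs)
  show ?case
    using linear_compose_endo[OF Cons.IH assms] by (simp add: o_def)
qed

lemma fold_update_linear:
  assumes "\<And>q. Vector_Spaces.linear scale scale (h q)" and "\<And>z. Vector_Spaces.linear scale scale (\<lambda>q. h q z)"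
    and "j < length qs"
  shows "fold h (qs[j := a + b]) z = fold h (qs[j := a]) z + fold h (qs[j := b]) z \<and>
         fold h (qs[j := scale c a]) z = scale c (fold h (qs[j := a]) z)"
  using assms(3)
proof (induction qs arbitrary: j z)
  case (Cons q qs)
  show ?case
  proof (cases j)
    case 0
    have "Vector_Spaces.linear scale scale (fold h qs)"
      by (rule linear_fold[OF assms(1)])
    then show ?thesis
      using 0 endo.linear_add[OF assms(2)] endo.linear_scale[OF assms(2)]
      by (simp add: endo.linear_add endo.linear_scale)
  next
    case (Suc j')
    then show ?thesis
      using Cons by simp
  qed
qed simp

context
  fixes \<Delta> :: "'b \<Rightarrow> 'b list list" and \<epsilon> :: "'b \<Rightarrow> 'a" and one :: 'b and h :: "'b \<Rightarrow> 'b \<Rightarrow> 'b"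
  assumes C: "coaugmented_coalgebra (\<lambda>x. map rev (\<Delta> x)) \<epsilon> one"
    and hb: "bilinear_map scale h" and h_one: "\<And>y. h one y = 0"
begin

lemma coproduct_length_of_op: "p \<in> set (\<Delta> x) \<Longrightarrow> length p = 2"
  using coproduct_length[OF C, of "rev p" x] by simp

lemma reduced_coproduct_length: "q \<in> set (reduced_coproduct scale one \<Delta> \<epsilon> r) \<Longrightarrow> length q = 2"
  using coproduct_length_of_op by (auto simp: reduced_coproduct_def Let_def)

lemma reduced_iter_length: "p \<in> set (reduced_iter scale one \<Delta> \<epsilon> k x) \<Longrightarrow> length p = Suc k"
proof (induction k arbitrary: p)
  case (Suc k)
  then obtain p' q where "p' \<in> set (reduced_iter scale one \<Delta> \<epsilon> k x)"
    and "q \<in> set (reduced_coproduct scale one \<Delta> \<epsilon> (p'!0))" and "p = q @ drop 1 p'"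
    by (auto simp: tensor_at_def)
  then show ?case
    using Suc.IH reduced_coproduct_length by fastforce
qed simp

text \<open>Since a vanishes on 1, the terms of the reduced coproduct that were added to or
  removed from the coproduct do not contribute.\<close>

lemma sum_list_reduced_coproduct:
  assumes ab: "bilinear_map scale a" and a_one: "\<And>y. a one y = 0"
  shows "sum_list (map (\<lambda>q. h (q!1) (a (q!0) y)) (reduced_coproduct scale one \<Delta> \<epsilon> r))
         = conv (\<lambda>x. map rev (\<Delta> x)) h a r y"
proof -
  let ?D = "\<lambda>x. map rev (\<Delta> x)"
  have lin: "Vector_Spaces.linear scale scale (\<lambda>x. conv ?D h a x y)"
    using bilinear_map_conv[OF C hb ab] by (rule bilinear_map_left)
  have "conv ?D h a one y = 0"
    using conv_at_one[OF C hb ab] h_one by simp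
  then have "conv ?D h a (rho scale one \<epsilon> r) y = conv ?D h a r y"
    unfolding rho_def using endo.linear_diff[OF lin] endo.linear_scale[OF lin] by simp
  moreover have "h (rho scale one \<epsilon> r) (a (- one) y) = 0"
    using endo.linear_neg[OF bilinear_map_left[OF ab]] a_one endo.linear_0[OF bilinear_map_right[OF hb]]
    by simp
  moreover have "sum_list (map (\<lambda>q. h (q!1) (a (q!0) y)) (\<Delta> r')) = conv ?D h a r' y" for r'
    using sum_list_map_rev_2[of "\<Delta> r'" "\<lambda>p. h (p!0) (a (p!1) y)"] coproduct_length_of_op
    by (simp add: conv_def)
  ultimately show ?thesis
    by (simp add: reduced_coproduct_def Let_def h_one)
qed

text \<open>Convolving on the left with respect to \<Delta>^cop applies the second tensor factor last; reading
  the iterated reduced coproduct of \<Delta> from its first factor on with fold reproduces this order.\<close>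

lemma conv_iterate_reduced_iter:
  assumes "bilinear_map scale a" and "\<And>y. a one y = 0"
  shows "((conv (\<lambda>x. map rev (\<Delta> x)) h) ^^ k) a x y
           = sum_list (map (\<lambda>p. fold h (tl p) (a (hd p) y)) (reduced_iter scale one \<Delta> \<epsilon> k x))"
  using assms
proof (induction k arbitrary: a)
  case 0
  then show ?case
    using endo.linear_diff[OF bilinear_map_left[OF 0(1)]] endo.linear_scale[OF bilinear_map_left[OF 0(1)]]
    by (simp add: rho_def)
next
  case (Suc k)
  let ?D = "\<lambda>x. map rev (\<Delta> x)"
  let ?a = "conv ?D h a"
  have "(conv ?D h ^^ Suc k) a x y = (conv ?D h ^^ k) ?a x y"
    by (simp add: funpow_Suc_right del: funpow.simps)
  also have "\<dots> = sum_list (map (\<lambda>p. fold h (tl p) (?a (hd p) y)) (reduced_iter scale one \<Delta> \<epsilon> k x))"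
    using Suc.IH[of ?a] bilinear_map_conv[OF C hb Suc.prems(1)] conv_at_one[OF C hb Suc.prems(1)] h_one
    by simp
  also have "\<dots> = sum_list (map (\<lambda>p. fold h (tl p) (a (hd p) y)) (reduced_iter scale one \<Delta> \<epsilon> (Suc k) x))"
    unfolding reduced_iter.simps sum_list_tensor_at
  proof (intro arg_cong[where f=sum_list] map_cong refl)
    fix p assume p: "p \<in> set (reduced_iter scale one \<Delta> \<epsilon> k x)"
    then obtain p0 rest where p_def: "p = p0 # rest"
      using reduced_iter_length[OF p] by (auto simp: length_Suc_conv)
    have fold_lin: "Vector_Spaces.linear scale scale (fold h rest)"
      by (rule linear_fold[OF bilinear_map_right[OF hb]])
    have "fold h (tl p) (?a (hd p) y)
        = fold h rest (sum_list (map (\<lambda>q. h (q!1) (a (q!0) y)) (reduced_coproduct scale one \<Delta> \<epsilon> p0)))"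
      using sum_list_reduced_coproduct[OF Suc.prems] p_def by simp
    also have "\<dots> = sum_list (map (\<lambda>q. fold h (tl (q @ rest)) (a (hd (q @ rest)) y))
                                  (reduced_coproduct scale one \<Delta> \<epsilon> p0))"
      unfolding linear_sum_list[OF fold_lin]
    proof (intro arg_cong[where f=sum_list] map_cong refl)
      fix q assume "q \<in> set (reduced_coproduct scale one \<Delta> \<epsilon> p0)"
      then obtain u v where "q = [u, v]"
        using reduced_coproduct_length length_2E by metis
      then show "fold h rest (h (q!1) (a (q!0) y)) = fold h (tl (q @ rest)) (a (hd (q @ rest)) y)"
        by simp
    qed
    finally show "fold h (tl p) (?a (hd p) y) = sum_list (map (\<lambda>q. fold h (tl (take 0 p @ q @ drop (Suc 0) p))
        (a (hd (take 0 p @ q @ drop (Suc 0) p)) y)) (reduced_coproduct scale one \<Delta> \<epsilon> (p!0)))"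
      by (simp add: p_def)
  qed
  finally show ?case .
qed


lemma multilinear_map_fold_chain:
  assumes ab: "bilinear_map scale a"
  shows "multilinear_map scale (Suc n) (\<lambda>p. fold h (tl p) (a (hd p) y))"
  unfolding multilinear_map_def
proof (intro allI impI)
  fix xs :: "'b list" and i :: nat and u v c
  assume "length xs = Suc n" and i: "i < Suc n"
  then obtain x0 rest where xs: "xs = x0 # rest" and len: "length rest = n"
    by (auto simp: length_Suc_conv)
  have fold_lin: "Vector_Spaces.linear scale scale (fold h rest)"
    by (rule linear_fold[OF bilinear_map_right[OF hb]])
  show "fold h (tl (xs[i := u + v])) (a (hd (xs[i := u + v])) y) =
          fold h (tl (xs[i := u])) (a (hd (xs[i := u])) y) + fold h (tl (xs[i := v])) (a (hd (xs[i := v])) y) \<and>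
        fold h (tl (xs[i := scale c u])) (a (hd (xs[i := scale c u])) y) =
          scale c (fold h (tl (xs[i := u])) (a (hd (xs[i := u])) y))"
  proof (cases i)
    case 0
    then show ?thesis
      using endo.linear_add[OF bilinear_map_left[OF ab]] endo.linear_scale[OF bilinear_map_left[OF ab]]
      by (simp add: xs endo.linear_add[OF fold_lin] endo.linear_scale[OF fold_lin])
  next
    case (Suc j)
    then show ?thesis
      using fold_update_linear[OF bilinear_map_right[OF hb] bilinear_map_left[OF hb], of j rest] i len
      by (simp add: xs)
  qed
qed

lemma conv_iterate_vanish:
  assumes "bilinear_map scale a" and "\<And>y. a one y = 0"
    and "tensor_eq scale (Suc n) (reduced_iter scale one \<Delta> \<epsilon> n x) []"
  shows "((conv (\<lambda>x. map rev (\<Delta> x)) h) ^^ n) a x y = 0"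
  using conv_iterate_reduced_iter[OF assms(1,2)]
    tensor_eq_sum_list_map[OF vector_space_axioms assms(3) multilinear_map_fold_chain[OF assms(1)]]
  by simp

lemma locally_nilpotent_if_connected:
  assumes "connected_coalgebra scale one \<Delta> \<epsilon>"
  shows "\<exists>n. \<forall>k\<ge>n. \<forall>y. conv_pow (\<lambda>x. map rev (\<Delta> x)) \<epsilon> h (Suc k) x y = 0"
proof -
  let ?D = "\<lambda>x. map rev (\<Delta> x)"
  obtain n where n: "tensor_eq scale (Suc n) (reduced_iter scale one \<Delta> \<epsilon> n x) []"
    using assms by (auto simp: connected_coalgebra_def)
  have powers: "bilinear_map scale ((conv ?D h ^^ j) h) \<and> (\<forall>y. (conv ?D h ^^ j) h one y = 0)" for j
  proof (induction j)
    case (Suc j)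
    then show ?case
      using bilinear_map_conv[OF C hb] conv_at_one[OF C hb] h_one by simp
  qed (simp add: hb h_one)
  have "conv_pow ?D \<epsilon> h (Suc k) x y = 0" if "n \<le> k" for k y
  proof -
    have "conv_pow ?D \<epsilon> h (Suc k) = (conv ?D h ^^ k) h"
      by (simp add: funpow_Suc_right conv_unit_right[OF C hb] del: funpow.simps)
    also have "\<dots> = (conv ?D h ^^ n) ((conv ?D h ^^ (k - n)) h)"
      using that by (metis funpow_add comp_apply le_add_diff_inverse)
    finally show ?thesis
      using conv_iterate_vanish[OF _ _ n] powers by simp
  qed
  then show ?thesis
    by blast
qed
end

section \<open>Post-Hopf algebras\<close>

text \<open>The unit acts trivially: 1 \<lhd> y = (1 \<lhd> 1)(1 \<lhd> y) and the invertibility of 1 \<lhd> - force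
  1 \<lhd> 1 = 1, and then 1 \<lhd> (1 \<lhd> z) = (1 \<lhd> 1) \<lhd> z = 1 \<lhd> z.\<close>

lemma left_post_hopf_unit_act:
  assumes "left_post_hopf scale m one \<Delta> \<epsilon> tri"
  shows "tri one z = z"
proof -
  have B: "bialgebra scale m one \<Delta> \<epsilon>" and tb: "bilinear_map scale tri"
    and act_mult: "\<forall>x y z. tri x (m y z) = sum_list (map (\<lambda>p. m (tri (p!0) y) (tri (p!1) z)) (\<Delta> x))"
    and act_act: "\<forall>x y z. tri x (tri y z) = tri (sum_list (map (\<lambda>p. m (p!0) (tri (p!1) y)) (\<Delta> x))) z"
    and inv: "conv_invertible scale \<Delta> \<epsilon> tri"
    using assms by (simp_all add: left_post_hopf_def hopf_algebra_def coalgebra_morphism2_def)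
  have C: "coaugmented_coalgebra \<Delta> \<epsilon> one"
    by (rule bialgebra_coaugmented_coalgebra[OF B])
  have mb: "bilinear_map scale m" and m_one: "\<And>x. m one x = x" "\<And>x. m x one = x" and e_one: "\<epsilon> one = 1"
    using B unfolding bialgebra_def by blast+
  obtain \<beta> where \<beta>: "bilinear_map scale \<beta>" "\<forall>x. conv \<Delta> tri \<beta> x = (\<lambda>y. scale (\<epsilon> x) y)"
    "\<forall>x. conv \<Delta> \<beta> tri x = (\<lambda>y. scale (\<epsilon> x) y)"
    using inv unfolding conv_invertible_def by blast
  have surj: "tri one (\<beta> one w) = w" for w
    using conv_at_one[OF C tb \<beta>(1), of w] \<beta>(2) e_one by simp
  have inj: "\<beta> one (tri one w) = w" for w
    using conv_at_one[OF C \<beta>(1) tb, of w] \<beta>(3) e_one by simp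
  have "tri one y = m (tri one one) (tri one y)" for y
    using act_mult[rule_format, of one one y] m_one sum_list_coproduct_one[OF C multilinear_map_2I[OF
        linear_compose_endo[OF bilinear_map_left[OF mb] bilinear_map_left[OF tb]]
        linear_compose_endo[OF bilinear_map_right[OF mb] bilinear_map_left[OF tb]]]]
    by simp
  then have "m (tri one one) w = w" for w
    using surj[of w] by metis
  then have one_one: "tri one one = one"
    using m_one(2)[of "tri one one"] by simp
  have "tri one (tri one z) = tri (tri one one) z"
    using act_act[rule_format, of one one z] m_one sum_list_coproduct_one[OF C multilinear_map_2I[OF
        bilinear_map_left[OF mb] linear_compose_endo[OF bilinear_map_right[OF mb] bilinear_map_left[OF tb]]]]
    by simp
  then show ?thesis
    using inj[of "tri one z"] inj[of z] one_one by metis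
qed

lemma conv_invertible_op_if_connected:
  assumes "left_post_hopf scale m one \<Delta> \<epsilon> tri" and "connected_coalgebra scale one \<Delta> \<epsilon>"
  shows "conv_invertible scale (\<lambda>x. map rev (\<Delta> x)) \<epsilon> tri"
proof -
  let ?h = "\<lambda>x y. scale (\<epsilon> x) y - tri x y"
  have H: "hopf_algebra scale m one \<Delta> \<epsilon>" and tb: "bilinear_map scale tri"
    using assms(1) by (simp_all add: left_post_hopf_def coalgebra_morphism2_def)
  have C: "coaugmented_coalgebra (\<lambda>x. map rev (\<Delta> x)) \<epsilon> one"
    using hopf_algebra_op[OF H] unfolding hopf_algebra_def by (blast intro: bialgebra_coaugmented_coalgebra)
  have hb: "bilinear_map scale ?h"
    using bilinear_map_conv_unit[of \<epsilon>] tb C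
    by (simp add: bilinear_map_def coaugmented_coalgebra_def endo.linear_compose_sub)
  have "?h one y = 0" for y
    using left_post_hopf_unit_act[OF assms(1)] C by (simp add: coaugmented_coalgebra_def)
  then have "conv_invertible scale (\<lambda>x. map rev (\<Delta> x)) \<epsilon> (\<lambda>x y. scale (\<epsilon> x) y - ?h x y)"
    using conv_invertible_if_locally_nilpotent[OF C hb] locally_nilpotent_if_connected[OF C hb _ assms(2)]
    by blast
  then show ?thesis
    by simp
qed

end

lemma conv_op_eq_if_cocommutative:
  assumes "vector_space sc" and "cocommutative sc \<Delta>"
    and "bilinear_map sc f" and "bilinear_map sc g"
  shows "conv (\<lambda>x. map rev (\<Delta> x)) f g = conv \<Delta> f g"
proof (intro ext)
  interpret vector_space sc
    by (rule assms(1))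
  fix x y
  show "conv (\<lambda>x. map rev (\<Delta> x)) f g x y = conv \<Delta> f g x y"
    using tensor_eq_sum_list_map[OF assms(1) _ multilinear_map_conv_summand[OF assms(3,4)]] assms(2)
    by (simp add: conv_def cocommutative_def del: map_map)
qed

lemma conv_invertible_op_if_cocommutative:
  assumes "vector_space sc" and "cocommutative sc \<Delta>" and "conv_invertible sc \<Delta> \<epsilon> f"
  shows "conv_invertible sc (\<lambda>x. map rev (\<Delta> x)) \<epsilon> f"
  using assms conv_op_eq_if_cocommutative[OF assms(1,2)] unfolding conv_invertible_def by metis

theorem proposition3p2:
  fixes sc :: "'k::field \<Rightarrow> 'h::ab_group_add \<Rightarrow> 'h"
    and m :: "'h \<Rightarrow> 'h \<Rightarrow> 'h" and one :: 'h
    and \<Delta> :: "'h \<Rightarrow> 'h list list" and \<epsilon> :: "'h \<Rightarrow> 'k"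
    and tri :: "'h \<Rightarrow> 'h \<Rightarrow> 'h"
  assumes "left_post_hopf sc m one \<Delta> \<epsilon> tri"
    and "cocommutative sc \<Delta> \<or> connected_coalgebra sc one \<Delta> \<epsilon>"
  shows "right_post_hopf sc (\<lambda>x y. m y x) one (\<lambda>x. map rev (\<Delta> x)) \<epsilon> (\<lambda>x y. tri y x)"
proof -
  have H: "hopf_algebra sc m one \<Delta> \<epsilon>" and M: "coalgebra_morphism2 sc \<Delta> \<epsilon> tri"
    and act_mult: "\<forall>x y z. tri x (m y z) = sum_list (map (\<lambda>p. m (tri (p!0) y) (tri (p!1) z)) (\<Delta> x))"
    and act_act: "\<forall>x y z. tri x (tri y z) = tri (sum_list (map (\<lambda>p. m (p!0) (tri (p!1) y)) (\<Delta> x))) z"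
    and inv: "conv_invertible sc \<Delta> \<epsilon> tri"
    using assms(1) unfolding left_post_hopf_def by blast+
  have vs: "vector_space sc" and len: "\<forall>p\<in>set (\<Delta> x). length p = 2" for x
    using H by (simp_all add: hopf_algebra_def bialgebra_def coproduct_map_def)
  have inv_op: "conv_invertible sc (\<lambda>x. map rev (\<Delta> x)) \<epsilon> tri"
    using assms(2) conv_invertible_op_if_cocommutative[OF vs _ inv]
      vector_space.conv_invertible_op_if_connected[OF vs assms(1)] by blast
  show ?thesis
    unfolding right_post_hopf_def sum_list_map_rev_2[OF len]
    using hopf_algebra_op[OF H] coalgebra_morphism2_op[OF M len] act_mult act_act inv_op by simp
qed

end
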